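(* Let $\mathcal{G}$ be a directed graph without self-loops, with vertices $v_1,\dots,v_k$ and edges $e_1,\dots,e_\ell$, and let $A_1,\dots,A_k$ be real $n\times n$ matrices. Suppose there exist invertible matrices $P_1,\dots,P_k$ and Jordan matrices $J_1,\dots,J_k$ with $A_i=P_iJ_iP_i^{-1}$ a Jordan decomposition of $A_i$ for $i=1,\dots,k$, such that for each edge $(r,s)\in\mathcal{E}(\mathcal{G})$ there exists $\eta_{(r,s)}>0$ with $$\Vert P_{(r,s)}e^{\eta_{(r,s)}J_r}\Vert<1,\qquad P_{(r,s)}:=P_s^{-1}P_r.$$ Then there exist open intervals $I_1,\dots,I_\ell\subseteq(0,\infty)$, with $\eta_{(r,s)}\in I_i$ whenever $e_i=(r,s)$, such that the switched system $x'(t)=A_{\sigma(t)}x(t)$, $t\geq 0$, is globally exponentially stable for every switching signal $\sigma\in\mathcal{S}_\mathcal{G}(I_1,\dots,I_\ell)$ that has infinitely many switching times $t_n$ with $t_n\to\infty$.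
   Context: $\mathcal{E}(\mathcal{G})$ is the set of ordered pairs $(i,j)$ such that there is an edge from $v_i$ to $v_j$. A $\mathcal{G}$-admissible signal is a piecewise constant right-continuous function $\sigma:[0,\infty)\to\{1,\dots,k\}$ with discontinuities (switching times) $0=t_0<t_1<t_2<\cdots$ such that, writing $\sigma_i$ for the value of $\sigma$ on $[t_{i-1},t_i)$, we have $(\sigma_i,\sigma_{i+1})\in\mathcal{E}(\mathcal{G})$ for all $i\geq1$; the set of such signals is $\mathcal{S}_\mathcal{G}$. The time spent on the edge $(\sigma_i,\sigma_{i+1})$ at the $i$-th switch is $t_i-t_{i-1}$ (the time spent in subsystem $\sigma_i$ before switching to $\sigma_{i+1}$). For open intervals $I_1,\dots,I_\ell\subseteq(0,\infty)$, $\mathcal{S}_\mathcal{G}(I_1,\dots,I_\ell)$ is the set of $\sigma\in\mathcal{S}_\mathcal{G}$ such that every time spent on edge $e_i$ lies in $I_i$, for each $i$. $\Vert\cdot\Vert$ is the spectral norm. The switched system is globally exponentially stable if there exist $\alpha,\beta>0$ such that every solution satisfies $\Vert x(t)\Vert\leq\alpha e^{-\beta t}\Vert x(0)\Vert$ for all $t\geq0$. *)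

theory Defs
  imports "HOL-Analysis.Analysis"
begin

primrec mat_pow :: "'a::semiring_1^'n^'n \<Rightarrow> nat \<Rightarrow> 'a^'n^'n" where
  "mat_pow M 0 = mat 1"
| "mat_pow M (Suc k) = M ** mat_pow M k"

definition mat_exp :: "complex^'n^'n \<Rightarrow> complex^'n^'n" where
  "mat_exp M = (\<Sum>k. (1 / fact k) *\<^sub>R mat_pow M k)"

definition spec_norm :: "complex^'n^'m \<Rightarrow> real" where
  "spec_norm M = onorm (\<lambda>x::complex^'n. M *v x)"

definition cmat :: "real^'n^'m \<Rightarrow> complex^'n^'m" where
  "cmat A = (\<chi> i j. complex_of_real (A $ i $ j))"

definition next_idx :: "'n::linorder \<Rightarrow> 'n \<Rightarrow> bool" where
  "next_idx i j \<longleftrightarrow> i < j \<and> \<not> (\<exists>m. i < m \<and> m < j)"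

text \<open>Jordan matrix: block diagonal with Jordan blocks, i.e. all entries vanish
  except the diagonal and the superdiagonal; superdiagonal entries are 0 or 1,
  and a superdiagonal 1 only occurs inside a block (equal diagonal entries).\<close>
definition jordan_matrix :: "complex^('n::{finite,linorder})^('n::{finite,linorder}) \<Rightarrow> bool" where
  "jordan_matrix J \<longleftrightarrow>
     (\<forall>i j. i \<noteq> j \<and> \<not> next_idx i j \<longrightarrow> J $ i $ j = 0) \<and>
     (\<forall>i j. next_idx i j \<longrightarrow> (J $ i $ j = 0 \<or> J $ i $ j = 1)) \<and>
     (\<forall>i j. next_idx i j \<and> J $ i $ j = 1 \<longrightarrow> J $ i $ i = J $ j $ j)"

text \<open>Vertices are 1..k, the edge set E is a set of ordered pairs.\<close>
definition admissible_signal ::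
    "(nat \<times> nat) set \<Rightarrow> (real \<Rightarrow> nat) \<Rightarrow> (nat \<Rightarrow> real) \<Rightarrow> bool" where
  "admissible_signal E \<sigma> ts \<longleftrightarrow>
     ts 0 = 0 \<and> strict_mono ts \<and> filterlim ts at_top sequentially \<and>
     (\<forall>i. \<forall>t\<in>{ts i..<ts (Suc i)}. \<sigma> t = \<sigma> (ts i)) \<and>
     (\<forall>i. (\<sigma> (ts i), \<sigma> (ts (Suc i))) \<in> E)"

definition dwell_in ::
    "(nat \<times> nat \<Rightarrow> real set) \<Rightarrow> (real \<Rightarrow> nat) \<Rightarrow> (nat \<Rightarrow> real) \<Rightarrow> bool" where
  "dwell_in I \<sigma> ts \<longleftrightarrow> (\<forall>i. ts (Suc i) - ts i \<in> I (\<sigma> (ts i), \<sigma> (ts (Suc i))))"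

definition switched_solution ::
    "(nat \<Rightarrow> real^'n^'n) \<Rightarrow> (real \<Rightarrow> nat) \<Rightarrow> (nat \<Rightarrow> real) \<Rightarrow> (real \<Rightarrow> real^'n) \<Rightarrow> bool" where
  "switched_solution A \<sigma> ts x \<longleftrightarrow>
     continuous_on {0..} x \<and>
     (\<forall>t>0. t \<notin> range ts \<longrightarrow> (x has_vector_derivative (A (\<sigma> t) *v x t)) (at t))"

definition switched_GES ::
    "(nat \<Rightarrow> real^'n^'n) \<Rightarrow> (real \<Rightarrow> nat) \<Rightarrow> (nat \<Rightarrow> real) \<Rightarrow> bool" where
  "switched_GES A \<sigma> ts \<longleftrightarrow>
     (\<exists>\<alpha>>0. \<exists>\<beta>>0. \<forall>x. switched_solution A \<sigma> ts x \<longrightarrow>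
        (\<forall>t\<ge>0. norm (x t) \<le> \<alpha> * exp (- \<beta> * t) * norm (x 0)))"

end

theory Submission
  imports Defs
begin

text \<open>In the coordinates y_n = P_(sigma_n)^-1 x(t_n), where sigma_n is the mode entered at the
  n-th switch, dwelling for time tau in mode r and then switching to s multiplies y_n by
  P_s^-1 P_r e^(tau J_r), because e^(tau A_r) = P_r e^(tau J_r) P_r^-1. The norm of this transition
  is continuous in tau and below 1 at tau = eta_(r,s), hence below a common q < 1 on small open
  intervals around the eta's. For signals dwelling in these intervals |y_n| <= q^n |y_0|; the
  dwell times are bounded by some T, so t_n <= n T, and the flow between two switches is
  uniformly bounded. This gives |x(t)| <= alpha e^(-beta t) |x(0)| with beta = -ln q / T.\<close>

section \<open>Bounded operators as a Banach algebra\<close>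

text \<open>A copy of \<open>'a \<Rightarrow>\<^sub>L 'a\<close> with composition as multiplication, so that \<open>exp\<close> of the Banach-algebra
  library applies; \<open>blinfun\<close> itself carries no multiplication.\<close>
typedef (overloaded) 'a endo = "UNIV :: ('a::real_normed_vector \<Rightarrow>\<^sub>L 'a) set"
  by simp

setup_lifting type_definition_endo

instantiation endo :: (real_normed_vector) real_normed_vector
begin
lift_definition norm_endo :: "'a endo \<Rightarrow> real" is norm .
lift_definition minus_endo :: "'a endo \<Rightarrow> 'a endo \<Rightarrow> 'a endo" is "(-)" .
lift_definition plus_endo :: "'a endo \<Rightarrow> 'a endo \<Rightarrow> 'a endo" is "(+)" .
lift_definition uminus_endo :: "'a endo \<Rightarrow> 'a endo" is uminus .
lift_definition zero_endo :: "'a endo" is 0 .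
lift_definition scaleR_endo :: "real \<Rightarrow> 'a endo \<Rightarrow> 'a endo" is scaleR .
definition dist_endo :: "'a endo \<Rightarrow> 'a endo \<Rightarrow> real" where
  "dist_endo a b = norm (a - b)"
definition uniformity_endo :: "('a endo \<times> 'a endo) filter" where
  "uniformity_endo = (INF e\<in>{0<..}. principal {(x, y). dist x y < e})"
definition open_endo :: "'a endo set \<Rightarrow> bool" where
  "open_endo S = (\<forall>x\<in>S. \<forall>\<^sub>F (x', y) in uniformity. x' = x \<longrightarrow> y \<in> S)"
definition sgn_endo :: "'a endo \<Rightarrow> 'a endo" where
  "sgn_endo x = inverse (norm x) *\<^sub>R x"
instance
  by standard
    (unfold dist_endo_def open_endo_def sgn_endo_def uniformity_endo_def,
     (rule refl | transfer, force simp: norm_triangle_ineq algebra_simps)+)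
end

instance endo :: (banach) banach
proof
  fix X :: "nat \<Rightarrow> 'a endo"
  assume "Cauchy X"
  then have "Cauchy (\<lambda>n. Rep_endo (X n))"
    unfolding Cauchy_def dist_norm by transfer
  then obtain L where "(\<lambda>n. Rep_endo (X n)) \<longlonglongrightarrow> L"
    using convergent_eq_Cauchy by blast
  then have "X \<longlonglongrightarrow> Abs_endo L"
    unfolding LIMSEQ_def dist_norm by (simp add: minus_endo.rep_eq norm_endo.rep_eq Abs_endo_inverse)
  then show "convergent X"
    by (auto simp: convergent_def)
qed

instantiation endo :: ("{real_normed_vector, perfect_space}") real_normed_algebra_1
begin
lift_definition times_endo :: "'a endo \<Rightarrow> 'a endo \<Rightarrow> 'a endo" is "(o\<^sub>L)" .
lift_definition one_endo :: "'a endo" is id_blinfun .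
instance
proof
  fix a b c :: "'a endo" and r :: real
  show "a * b * c = a * (b * c)" "(a + b) * c = a * c + b * c" "a * (b + c) = a * b + a * c"
    "1 * a = a" "a * 1 = a" "r *\<^sub>R a * b = r *\<^sub>R (a * b)" "a * r *\<^sub>R b = r *\<^sub>R (a * b)"
    by (transfer, auto intro!: blinfun_eqI simp: blinfun.bilinear_simps)+
  show "norm (a * b) \<le> norm a * norm b"
    by transfer (rule norm_blinfun_compose)
  show "norm (1::'a endo) = 1"
    by transfer simp
  then show "(0::'a endo) \<noteq> 1"
    by (metis norm_zero zero_neq_one)
qed
end

lift_definition endo_apply :: "'a::real_normed_vector endo \<Rightarrow> 'a \<Rightarrow> 'a" is blinfun_apply .

lemma endo_apply_mult: "endo_apply (E * F) v = endo_apply E (endo_apply F v)"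
  by transfer simp

lemma endo_apply_one [simp]: "endo_apply 1 v = v"
  by transfer simp

lemma norm_endo_apply_le: "norm (endo_apply E v) \<le> norm E * norm v"
  by transfer (rule norm_blinfun)

lemma bounded_bilinear_endo_apply: "bounded_bilinear endo_apply"
proof
  fix a a' :: "'a endo" and b b' :: 'a and r :: real
  show "endo_apply (a + a') b = endo_apply a b + endo_apply a' b"
    "endo_apply a (b + b') = endo_apply a b + endo_apply a b'"
    "endo_apply (r *\<^sub>R a) b = r *\<^sub>R endo_apply a b"
    "endo_apply a (r *\<^sub>R b) = r *\<^sub>R endo_apply a b"
    by (transfer, simp add: blinfun.bilinear_simps)+
  show "\<exists>K. \<forall>a b. norm (endo_apply a b) \<le> norm a * norm b * K"
    by (rule exI[of _ 1]) (simp add: norm_endo_apply_le)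
qed

lemma endo_eqI: "(\<And>v. endo_apply E v = endo_apply F v) \<Longrightarrow> E = F"
  by transfer (rule blinfun_eqI)

lemma power_conj:
  fixes Q Q' X :: "'a::monoid_mult"
  assumes "Q * Q' = 1" "Q' * Q = 1"
  shows "(Q * X * Q') ^ k = Q * X ^ k * Q'"
proof (induction k)
  case 0
  show ?case using assms(1) by simp
next
  case (Suc k)
  have "(Q * X * Q') ^ Suc k = Q * X * (Q' * Q) * X ^ k * Q'"
    using Suc.IH by (simp add: mult.assoc)
  then show ?case
    using assms(2) by (simp add: mult.assoc)
qed

lemma exp_conj:
  fixes Q Q' X :: "'a::{real_normed_algebra_1, banach}"
  assumes "Q * Q' = 1" "Q' * Q = 1"
  shows "exp (Q * X * Q') = Q * exp X * Q'"
proof -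
  have "bounded_linear (\<lambda>Y. Q * Y * Q')"
    by (intro bounded_linear_compose[OF bounded_linear_mult_left] bounded_linear_mult_right)
  then have "(\<lambda>k. Q * (X ^ k /\<^sub>R fact k) * Q') sums (Q * exp X * Q')"
    by (rule bounded_linear.sums[OF _ exp_converges])
  then have "(\<lambda>k. (Q * X * Q') ^ k /\<^sub>R fact k) sums (Q * exp X * Q')"
    by (simp add: power_conj[OF assms])
  then show ?thesis
    using exp_converges sums_unique2 by blast
qed

lemma has_vector_derivative_exp_scaleR_reflect:
  fixes M :: "'a::{real_normed_algebra_1, banach}"
  shows "((\<lambda>t. exp ((a - t) *\<^sub>R M)) has_vector_derivative - (exp ((a - t) *\<^sub>R M) * M)) (at t)"
proof -
  have "((\<lambda>t. a - t) has_vector_derivative -1) (at t)"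
    by (auto intro!: derivative_eq_intros)
  from vector_diff_chain_at[OF this exp_scaleR_has_vector_derivative_right]
  show ?thesis
    by (simp add: o_def)
qed

text \<open>The solution is recovered by showing that \<open>exp ((a - t) M) x(t)\<close> has zero derivative.\<close>
lemma linear_ode_solution_eq_exp:
  fixes x :: "real \<Rightarrow> 'a::{banach, perfect_space}" and M :: "'a endo"
  assumes "a \<le> b" and cont: "continuous_on {a..b} x"
    and deriv: "\<And>t. t \<in> {a<..<b} \<Longrightarrow> (x has_vector_derivative endo_apply M (x t)) (at t)"
  shows "x b = endo_apply (exp ((b - a) *\<^sub>R M)) (x a)"
proof -
  define g where "g t = endo_apply (exp ((a - t) *\<^sub>R M)) (x t)" for t
  have "continuous_on {a..b} (\<lambda>t. exp ((a - t) *\<^sub>R M))"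
    by (intro continuous_at_imp_continuous_on ballI
        has_vector_derivative_continuous[OF has_vector_derivative_exp_scaleR_reflect])
  then have g_cont: "continuous_on {a..b} g"
    unfolding g_def by (rule bounded_bilinear.continuous_on[OF bounded_bilinear_endo_apply _ cont])
  have g_deriv: "(g has_derivative (\<lambda>h. 0)) (at t within {a..b})" if "t \<in> {a..b} - {a, b}" for t
  proof -
    have "(g has_vector_derivative
        endo_apply (exp ((a - t) *\<^sub>R M)) (endo_apply M (x t))
          + endo_apply (- (exp ((a - t) *\<^sub>R M) * M)) (x t)) (at t)"
      unfolding g_def using that
      by (intro bounded_bilinear.has_vector_derivative[OF bounded_bilinear_endo_apply
            has_vector_derivative_exp_scaleR_reflect deriv]) simp
    then have "(g has_vector_derivative 0) (at t)"
      by (simp add: bounded_bilinear.minus_left[OF bounded_bilinear_endo_apply] endo_apply_mult)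
    then show ?thesis
      by (simp add: has_vector_derivative_def has_derivative_at_withinI)
  qed
  have "g b = g a"
    by (rule has_derivative_zero_unique_strong_interval[of "{a, b}" a b g "g a" b])
      (use \<open>a \<le> b\<close> g_cont g_deriv in auto)
  then have "x a = endo_apply (exp ((a - b) *\<^sub>R M)) (x b)"
    by (simp add: g_def)
  have "exp ((b - a) *\<^sub>R M) * exp ((a - b) *\<^sub>R M) = 1"
    using exp_minus_inverse[of "(b - a) *\<^sub>R M"] by (simp flip: scaleR_minus_left)
  then have "x b = endo_apply (exp ((b - a) *\<^sub>R M) * exp ((a - b) *\<^sub>R M)) (x b)"
    by simp
  also have "\<dots> = endo_apply (exp ((b - a) *\<^sub>R M)) (x a)"
    using \<open>x a = _\<close> by (simp add: endo_apply_mult)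
  finally show ?thesis .
qed

section \<open>Matrices as operators\<close>

lift_definition endo_of_mat :: "'a::{euclidean_space, real_normed_field}^'n^'n \<Rightarrow> ('a^'n) endo"
  is "\<lambda>M. Blinfun ((*v) M)" .

lemma endo_apply_endo_of_mat [simp]: "endo_apply (endo_of_mat M) = (*v) M"
  by transfer (simp add: bounded_linear_Blinfun_apply)

lemma endo_of_mat_mult: "endo_of_mat (M ** N) = endo_of_mat M * endo_of_mat N"
  by (rule endo_eqI) (simp add: endo_apply_mult matrix_vector_mul_assoc)

lemma endo_of_mat_mat_1: "endo_of_mat (mat 1) = 1"
  by (rule endo_eqI) simp

lemma endo_of_mat_mat_pow: "endo_of_mat (mat_pow M k) = endo_of_mat M ^ k"
  by (induction k) (simp_all add: endo_of_mat_mat_1 endo_of_mat_mult)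

lemma endo_of_mat_add: "endo_of_mat (M + N) = endo_of_mat M + endo_of_mat N"
  by (rule endo_eqI)
    (simp add: bounded_bilinear.add_left[OF bounded_bilinear_endo_apply] matrix_vector_mult_add_rdistrib)

lemma endo_of_mat_scaleR: "endo_of_mat (c *\<^sub>R M) = c *\<^sub>R endo_of_mat M"
  by (rule endo_eqI)
    (simp add: bounded_bilinear.scaleR_left[OF bounded_bilinear_endo_apply] vec_eq_iff
      matrix_vector_mult_def scaleR_sum_right)

lemma bounded_linear_endo_of_mat: "bounded_linear endo_of_mat"
  unfolding linear_conv_bounded_linear[symmetric]
  by (rule linearI) (simp_all add: endo_of_mat_add endo_of_mat_scaleR)

text \<open>The matrix series converges because its image under \<open>endo_of_mat\<close> does and
  \<open>matrix \<circ> endo_apply\<close> is a continuous left inverse of \<open>endo_of_mat\<close>.\<close>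
lemma endo_of_mat_mat_exp: "endo_of_mat (mat_exp M) = exp (endo_of_mat M)"
proof -
  define f where "f k = (1 / fact k) *\<^sub>R mat_pow M k" for k
  have series: "(\<lambda>k. endo_of_mat (f k)) sums exp (endo_of_mat M)"
    using exp_converges[of "endo_of_mat M"]
    by (simp add: f_def endo_of_mat_scaleR endo_of_mat_mat_pow divide_inverse_commute)
  then have "(\<lambda>n. matrix (endo_apply (\<Sum>k<n. endo_of_mat (f k))))
      \<longlonglongrightarrow> matrix (endo_apply (exp (endo_of_mat M)))"
    unfolding sums_def matrix_def
    by (intro tendsto_vec_lambda tendsto_vec_nth
        bounded_bilinear.tendsto[OF bounded_bilinear_endo_apply] tendsto_const)
  moreover have "(\<Sum>k<n. endo_of_mat (f k)) = endo_of_mat (\<Sum>k<n. f k)" for n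
    by (rule linear_sum[OF bounded_linear.linear[OF bounded_linear_endo_of_mat], symmetric])
  ultimately have "f sums matrix (endo_apply (exp (endo_of_mat M)))"
    by (simp add: sums_def)
  moreover have "mat_exp M = suminf f"
    by (simp add: mat_exp_def f_def[abs_def])
  ultimately have "mat_exp M = matrix (endo_apply (exp (endo_of_mat M)))"
    by (simp add: sums_iff)
  then show ?thesis
    using bounded_linear.sums[OF bounded_linear_endo_of_mat \<open>f sums _\<close>] series
    by (metis sums_unique2)
qed

lemma spec_norm_eq_norm_endo_of_mat: "spec_norm M = norm (endo_of_mat M)"
  by (simp add: spec_norm_def norm_endo.rep_eq endo_of_mat.rep_eq norm_blinfun.rep_eq
      bounded_linear_Blinfun_apply)

lemma matrix_inv_mult:
  assumes "invertible M"
  shows "M ** matrix_inv M = mat 1" "matrix_inv M ** M = mat 1"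
  using someI_ex[OF assms[unfolded invertible_def]] by (simp_all add: matrix_inv_def)

lemma endo_of_mat_mult_matrix_inv:
  assumes "invertible M"
  shows "endo_of_mat M * endo_of_mat (matrix_inv M) = 1"
    and "endo_of_mat (matrix_inv M) * endo_of_mat M = 1"
  by (simp_all add: matrix_inv_mult[OF assms] flip: endo_of_mat_mult endo_of_mat_mat_1)

lemma isCont_spec_norm_mult_mat_exp:
  fixes N J :: "complex^'n^'n"
  shows "isCont (\<lambda>\<tau>. spec_norm (N ** mat_exp (\<tau> *\<^sub>R J))) \<tau>"
proof -
  have "isCont (\<lambda>\<tau>. norm (endo_of_mat N * exp (\<tau> *\<^sub>R endo_of_mat J))) \<tau>"
    by (intro continuous_norm continuous_mult continuous_const
        has_vector_derivative_continuous[OF exp_scaleR_has_vector_derivative_right])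
  then show ?thesis
    by (simp add: spec_norm_eq_norm_endo_of_mat endo_of_mat_mult endo_of_mat_mat_exp endo_of_mat_scaleR)
qed

section \<open>Solutions of the switched system\<close>

definition cvec :: "real^'n \<Rightarrow> complex^'n" where
  "cvec v = (\<chi> i. complex_of_real (v $ i))"

lemma bounded_linear_cvec: "bounded_linear cvec"
  unfolding linear_conv_bounded_linear[symmetric]
  by (rule linearI) (simp_all add: cvec_def vec_eq_iff scaleR_conv_of_real[where 'a=complex])

lemma norm_cvec [simp]: "norm (cvec v) = norm v"
  by (simp add: cvec_def norm_vec_def)

lemma cmat_mult_cvec: "cmat M *v cvec v = cvec (M *v v)"
  by (simp add: cmat_def cvec_def vec_eq_iff matrix_vector_mult_def)

definition flow :: "real^'n^'n \<Rightarrow> real \<Rightarrow> (complex^'n) endo" where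
  "flow A \<tau> = exp (\<tau> *\<^sub>R endo_of_mat (cmat A))"

lemma norm_transition_eq_spec_norm:
  assumes "invertible P" "cmat A = P ** J ** matrix_inv P"
  shows "norm (endo_of_mat P' * flow A \<tau> * endo_of_mat P) = spec_norm ((P' ** P) ** mat_exp (\<tau> *\<^sub>R J))"
proof -
  have similar: "\<tau> *\<^sub>R endo_of_mat (cmat A)
      = endo_of_mat P * (\<tau> *\<^sub>R endo_of_mat J) * endo_of_mat (matrix_inv P)"
    by (simp add: assms(2) endo_of_mat_mult)
  have "flow A \<tau> = endo_of_mat P * exp (\<tau> *\<^sub>R endo_of_mat J) * endo_of_mat (matrix_inv P)"
    unfolding flow_def similar by (rule exp_conj[OF endo_of_mat_mult_matrix_inv[OF assms(1)]])
  then have "flow A \<tau> * endo_of_mat P = endo_of_mat P * exp (\<tau> *\<^sub>R endo_of_mat J)"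
    by (simp add: endo_of_mat_mult_matrix_inv[OF assms(1)] mult.assoc)
  then show ?thesis
    by (simp add: spec_norm_eq_norm_endo_of_mat endo_of_mat_mult endo_of_mat_mat_exp endo_of_mat_scaleR
        mult.assoc)
qed

lemma norm_flow_le: "0 \<le> \<tau> \<Longrightarrow> norm (flow A \<tau>) \<le> exp (\<tau> * norm (endo_of_mat (cmat A)))"
  unfolding flow_def using norm_exp[of "\<tau> *\<^sub>R endo_of_mat (cmat A)"] by simp

lemma obtain_index_between:
  fixes ts :: "nat \<Rightarrow> 'a::linorder"
  assumes "ts 0 \<le> t" and "t < ts m"
  obtains i where "ts i \<le> t" "t < ts (Suc i)"
proof -
  define n where "n = (LEAST n. t < ts n)"
  have "t < ts n"
    unfolding n_def using assms(2) by (rule LeastI)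
  moreover have "n \<noteq> 0"
    using \<open>t < ts n\<close> assms(1) by (intro notI) simp
  then obtain i where "n = Suc i"
    using not0_implies_Suc by blast
  moreover have "\<not> t < ts i"
    using not_less_Least[of i "\<lambda>n. t < ts n"] \<open>n = Suc i\<close> n_def by simp
  ultimately show ?thesis
    using that by (simp add: not_less)
qed

lemma not_in_range_between:
  assumes "strict_mono ts" "ts i < s" "s < ts (Suc i)"
  shows "s \<notin> range ts"
proof
  assume "s \<in> range ts"
  then obtain m where "s = ts m" by auto
  with assms have "i < m" "m < Suc i"
    by (simp_all add: strict_mono_less)
  then show False by simp
qed

lemma switched_solution_flow:
  assumes adm: "admissible_signal E \<sigma> ts" and sol: "switched_solution A \<sigma> ts x"
    and s: "ts i \<le> s" "s \<le> ts (Suc i)"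
  shows "cvec (x s) = endo_apply (flow (A (\<sigma> (ts i))) (s - ts i)) (cvec (x (ts i)))"
  unfolding flow_def
proof (rule linear_ode_solution_eq_exp)
  have ts_nonneg: "0 \<le> ts i"
    using adm strict_mono_less_eq[of ts 0 i] by (simp add: admissible_signal_def)
  show "ts i \<le> s" by fact
  show "continuous_on {ts i..s} (\<lambda>t. cvec (x t))"
  proof (rule bounded_linear.continuous_on[OF bounded_linear_cvec])
    show "continuous_on {ts i..s} x"
      using sol ts_nonneg unfolding switched_solution_def
      by (elim conjE continuous_on_subset) auto
  qed
  fix u
  assume u: "u \<in> {ts i<..<s}"
  then have "0 < u" "u \<notin> range ts"
    using ts_nonneg s adm not_in_range_between[of ts i u] unfolding admissible_signal_def
    by auto
  moreover have "\<sigma> u = \<sigma> (ts i)"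
    using adm u s unfolding admissible_signal_def by auto
  ultimately have "(x has_vector_derivative A (\<sigma> (ts i)) *v x u) (at u)"
    using sol unfolding switched_solution_def by metis
  from bounded_linear.has_vector_derivative[OF bounded_linear_cvec this]
  show "((\<lambda>t. cvec (x t)) has_vector_derivative
      endo_apply (endo_of_mat (cmat (A (\<sigma> (ts i))))) (cvec (x u))) (at u)"
    by (simp add: cmat_mult_cvec)
qed

section \<open>Exponential stability under contracting switches\<close>

lemma switching_time_le:
  assumes "ts 0 = 0" and "\<And>i. ts (Suc i) - ts i \<le> T"
  shows "ts i \<le> real i * T"
proof (induction i)
  case (Suc i)
  then show ?case
    using assms(2)[of i] by (simp add: algebra_simps)
qed (simp add: assms(1))

lemma le_power_mult_if_step_le:
  fixes f :: "nat \<Rightarrow> real"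
  assumes step: "\<And>i. f (Suc i) \<le> q * f i" and "0 \<le> q"
  shows "f i \<le> q ^ i * f 0"
proof (induction i)
  case (Suc i)
  have "f (Suc i) \<le> q * f i"
    by (rule step)
  also have "\<dots> \<le> q * (q ^ i * f 0)"
    using Suc.IH \<open>0 \<le> q\<close> by (rule mult_left_mono)
  finally show ?case
    by (simp add: mult.assoc)
qed simp

lemma power_le_exp_decay:
  fixes q T t :: real
  assumes "0 < q" "q < 1" "0 < T" "t < real (Suc i) * T"
  shows "q ^ i \<le> exp (ln q / T * t) / q"
proof -
  have "real (Suc i) * T * ln q \<le> t * ln q"
    using assms by (intro mult_right_mono_neg) auto
  then have "real (Suc i) * ln q \<le> ln q / T * t"
    using assms(3) by (simp add: field_simps)
  then have "q ^ Suc i \<le> exp (ln q / T * t)"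
    using assms(1) by (metis exp_le_cancel_iff exp_ln exp_of_nat_mult)
  then show ?thesis
    using assms(1) by (simp add: field_simps)
qed

lemma norm_flow_mult_bounded:
  fixes A :: "nat \<Rightarrow> real^'n^'n" and Q :: "nat \<Rightarrow> (complex^'n) endo"
  assumes "finite V"
  obtains C where "0 \<le> C" "\<forall>j\<in>V. \<forall>\<tau>\<in>{0..T}. norm (flow (A j) \<tau> * Q j) \<le> C"
proof
  define C where "C = (\<Sum>j\<in>V. exp (T * norm (endo_of_mat (cmat (A j)))) * norm (Q j))"
  show "0 \<le> C"
    unfolding C_def by (intro sum_nonneg) simp
  show "\<forall>j\<in>V. \<forall>\<tau>\<in>{0..T}. norm (flow (A j) \<tau> * Q j) \<le> C"
  proof (intro ballI)
    fix j \<tau>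
    assume "j \<in> V" "\<tau> \<in> {0..T}"
    then have "\<tau> * norm (endo_of_mat (cmat (A j))) \<le> T * norm (endo_of_mat (cmat (A j)))"
      by (intro mult_right_mono) auto
    then have "norm (flow (A j) \<tau>) \<le> exp (T * norm (endo_of_mat (cmat (A j))))"
      using norm_flow_le[of \<tau> "A j"] \<open>\<tau> \<in> {0..T}\<close> by (meson atLeastAtMost_iff exp_le_cancel_iff order_trans)
    then have "norm (flow (A j) \<tau> * Q j) \<le> exp (T * norm (endo_of_mat (cmat (A j)))) * norm (Q j)"
      by (meson mult_right_mono norm_ge_zero norm_mult_ineq order_trans)
    also have "\<dots> \<le> C"
      unfolding C_def using \<open>finite V\<close> \<open>j \<in> V\<close> by (intro member_le_sum) auto
    finally show "norm (flow (A j) \<tau> * Q j) \<le> C" .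
  qed
qed

text \<open>In the coordinates \<open>y i = Q' (\<sigma> (ts i)) x(ts i)\<close> every switch contracts by the factor \<open>q\<close>.\<close>
lemma norm_switched_solution_le:
  fixes Q Q' :: "nat \<Rightarrow> (complex^'n) endo"
  assumes adm: "admissible_signal E \<sigma> ts" and sol: "switched_solution A \<sigma> ts x"
    and coord: "\<And>i. Q (\<sigma> (ts i)) * Q' (\<sigma> (ts i)) = 1"
    and contract: "\<And>i. norm (Q' (\<sigma> (ts (Suc i))) * flow (A (\<sigma> (ts i))) (ts (Suc i) - ts i)
        * Q (\<sigma> (ts i))) \<le> q"
    and "0 \<le> q"
    and growth: "\<And>i \<tau>. 0 \<le> \<tau> \<Longrightarrow> \<tau> \<le> ts (Suc i) - ts i \<Longrightarrow>
        norm (flow (A (\<sigma> (ts i))) \<tau> * Q (\<sigma> (ts i))) \<le> C"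
    and t: "ts i \<le> t" "t \<le> ts (Suc i)"
  shows "norm (x t) \<le> C * q ^ i * norm (Q' (\<sigma> 0)) * norm (x 0)"
proof -
  define y where "y i = endo_apply (Q' (\<sigma> (ts i))) (cvec (x (ts i)))" for i
  have x_eq: "cvec (x s) = endo_apply (flow (A (\<sigma> (ts i))) (s - ts i) * Q (\<sigma> (ts i))) (y i)"
    if "ts i \<le> s" "s \<le> ts (Suc i)" for i s
    using switched_solution_flow[OF adm sol that] coord[of i]
    by (simp add: y_def mult.assoc flip: endo_apply_mult)
  have "norm (y (Suc i)) \<le> q * norm (y i)" for i
  proof -
    have "y (Suc i) = endo_apply (Q' (\<sigma> (ts (Suc i))) * flow (A (\<sigma> (ts i))) (ts (Suc i) - ts i)
        * Q (\<sigma> (ts i))) (y i)"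
      using x_eq[of i "ts (Suc i)"] adm strict_mono_less_eq[of ts i "Suc i"]
      by (simp add: y_def admissible_signal_def endo_apply_mult mult.assoc)
    then show ?thesis
      by (metis contract norm_endo_apply_le mult_right_mono norm_ge_zero order_trans)
  qed
  then have y_le: "norm (y i) \<le> q ^ i * norm (y 0)"
    using \<open>0 \<le> q\<close> by (rule le_power_mult_if_step_le)
  have y0_le: "norm (y 0) \<le> norm (Q' (\<sigma> 0)) * norm (x 0)"
    using norm_endo_apply_le[of "Q' (\<sigma> 0)" "cvec (x 0)"] adm by (simp add: y_def admissible_signal_def)
  have "0 \<le> C"
    using growth[of 0 i] t by (smt (verit) norm_ge_zero)
  have "norm (x t) = norm (endo_apply (flow (A (\<sigma> (ts i))) (t - ts i) * Q (\<sigma> (ts i))) (y i))"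
    using x_eq[OF t] by (metis norm_cvec)
  also have "\<dots> \<le> norm (flow (A (\<sigma> (ts i))) (t - ts i) * Q (\<sigma> (ts i))) * norm (y i)"
    by (rule norm_endo_apply_le)
  also have "\<dots> \<le> C * norm (y i)"
    using growth[of "t - ts i" i] t by (intro mult_right_mono) auto
  also have "\<dots> \<le> C * (q ^ i * (norm (Q' (\<sigma> 0)) * norm (x 0)))"
    using y_le y0_le \<open>0 \<le> C\<close> \<open>0 \<le> q\<close> by (meson mult_left_mono order_trans zero_le_power)
  finally show ?thesis
    by (simp add: mult.assoc)
qed

lemma switched_GES_of_contraction:
  fixes A :: "nat \<Rightarrow> real^'n^'n" and Q Q' :: "nat \<Rightarrow> (complex^'n) endo"
  assumes adm: "admissible_signal E \<sigma> ts" and "dwell_in I \<sigma> ts"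
    and "finite V" and "E \<subseteq> V \<times> V"
    and coord: "\<forall>j\<in>V. Q j * Q' j = 1"
    and contract: "\<forall>(r, s)\<in>E. \<forall>\<tau>\<in>I (r, s). norm (Q' s * flow (A r) \<tau> * Q r) \<le> q \<and> \<tau> \<le> T"
    and "0 < q" "q < 1"
  shows "switched_GES A \<sigma> ts"
proof -
  have switch: "(\<sigma> (ts i), \<sigma> (ts (Suc i))) \<in> E" for i
    using adm by (simp add: admissible_signal_def)
  then have modes: "\<sigma> (ts i) \<in> V" for i
    using \<open>E \<subseteq> V \<times> V\<close> by blast
  have step: "norm (Q' (\<sigma> (ts (Suc i))) * flow (A (\<sigma> (ts i))) (ts (Suc i) - ts i) * Q (\<sigma> (ts i))) \<le> q"
    and dwell: "ts (Suc i) - ts i \<le> T" for i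
    using contract switch[of i] \<open>dwell_in I \<sigma> ts\<close> by (auto simp: dwell_in_def)
  obtain C where "0 \<le> C" and C: "\<forall>j\<in>V. \<forall>\<tau>\<in>{0..T}. norm (flow (A j) \<tau> * Q j) \<le> C"
    using norm_flow_mult_bounded[OF \<open>finite V\<close>] by blast
  have growth: "norm (flow (A (\<sigma> (ts i))) \<tau> * Q (\<sigma> (ts i))) \<le> C"
    if "0 \<le> \<tau>" "\<tau> \<le> ts (Suc i) - ts i" for i \<tau>
    using C modes[of i] dwell[of i] that by auto
  have "ts 0 < ts 1"
    using adm strict_monoD[of ts 0 1] unfolding admissible_signal_def by simp
  then have "0 < T"
    using dwell[of 0] by simp
  define \<beta> where "\<beta> = - ln q / T"
  define \<alpha> where "\<alpha> = C * norm (Q' (\<sigma> 0)) / q + 1"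
  have "0 < \<beta>" "0 < \<alpha>"
    using \<open>0 < T\<close> \<open>0 < q\<close> \<open>q < 1\<close> \<open>0 \<le> C\<close>
    by (simp_all add: \<beta>_def \<alpha>_def divide_neg_pos add_nonneg_pos)
  have "norm (x t) \<le> \<alpha> * exp (- \<beta> * t) * norm (x 0)"
    if sol: "switched_solution A \<sigma> ts x" and "0 \<le> t" for x t
  proof -
    obtain m where "t < ts m"
      using adm unfolding admissible_signal_def filterlim_at_top_dense eventually_sequentially
      by (meson order_refl)
    then obtain i where t: "ts i \<le> t" "t < ts (Suc i)"
      using obtain_index_between[of ts t m] adm \<open>0 \<le> t\<close> by (auto simp: admissible_signal_def)
    have "ts (Suc i) \<le> real (Suc i) * T"
      using switching_time_le[of ts T] adm dwell unfolding admissible_signal_def by blast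
    then have "q ^ i \<le> exp (- \<beta> * t) / q"
      using power_le_exp_decay[OF \<open>0 < q\<close> \<open>q < 1\<close> \<open>0 < T\<close>, of t i] t by (simp add: \<beta>_def)
    have "norm (x t) \<le> C * q ^ i * norm (Q' (\<sigma> 0)) * norm (x 0)"
      by (rule norm_switched_solution_le[OF adm sol _ step _ growth]) (use coord modes \<open>0 < q\<close> t in auto)
    also have "\<dots> \<le> C * (exp (- \<beta> * t) / q) * norm (Q' (\<sigma> 0)) * norm (x 0)"
      using \<open>q ^ i \<le> _\<close> \<open>0 \<le> C\<close> by (intro mult_right_mono mult_left_mono) auto
    also have "\<dots> = (\<alpha> - 1) * exp (- \<beta> * t) * norm (x 0)"
      by (simp add: \<alpha>_def)
    also have "\<dots> \<le> \<alpha> * exp (- \<beta> * t) * norm (x 0)"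
      by (intro mult_right_mono) auto
    finally show ?thesis .
  qed
  then show ?thesis
    unfolding switched_GES_def using \<open>0 < \<alpha>\<close> \<open>0 < \<beta>\<close> by blast
qed

text \<open>The level \<open>q\<close> is the largest of the midpoints between \<open>g e (\<eta> e)\<close> and \<open>1\<close>; continuity
  keeps \<open>g e\<close> below it near \<open>\<eta> e\<close>, and the radius \<open>\<delta> e \<le> \<eta> e\<close> keeps the intervals positive.\<close>
lemma contraction_intervals:
  fixes g :: "'e \<Rightarrow> real \<Rightarrow> real"
  assumes "finite E" and "\<And>e. e \<in> E \<Longrightarrow> 0 < \<eta> e \<and> g e (\<eta> e) < 1 \<and> isCont (g e) (\<eta> e)"
  obtains I q T where
    "\<forall>e\<in>E. open (I e) \<and> is_interval (I e) \<and> I e \<subseteq> {0<..} \<and> \<eta> e \<in> I e"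
    "\<forall>e\<in>E. \<forall>\<tau>\<in>I e. g e \<tau> \<le> q \<and> \<tau> \<le> T" "0 < q" "q < 1"
proof -
  define q where "q = Max (insert (1/2) ((\<lambda>e. (1 + g e (\<eta> e)) / 2) ` E))"
  have "0 < q" "q < 1"
    using \<open>finite E\<close> assms(2) by (auto simp: q_def Max_gr_iff)
  have "\<exists>\<delta>>0. \<delta> \<le> \<eta> e \<and> (\<forall>\<tau>. \<bar>\<tau> - \<eta> e\<bar> < \<delta> \<longrightarrow> g e \<tau> < q)" if e: "e \<in> E" for e
  proof -
    have "(1 + g e (\<eta> e)) / 2 \<le> q"
      unfolding q_def using \<open>finite E\<close> e by (intro Max_ge) auto
    then have "g e (\<eta> e) < q"
      using assms(2)[OF e] by auto
    then have "\<forall>\<^sub>F \<tau> in at (\<eta> e). g e \<tau> < q"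
      using assms(2)[OF e] unfolding isCont_def by (blast intro: order_tendstoD)
    then obtain d where "d > 0" "\<forall>\<tau>. \<tau> \<noteq> \<eta> e \<and> dist \<tau> (\<eta> e) < d \<longrightarrow> g e \<tau> < q"
      unfolding eventually_at by auto
    then have "\<forall>\<tau>. \<bar>\<tau> - \<eta> e\<bar> < d \<longrightarrow> g e \<tau> < q"
      using \<open>g e (\<eta> e) < q\<close> by (metis dist_real_def)
    then show ?thesis
      using assms(2)[OF e] \<open>d > 0\<close> by (intro exI[of _ "min d (\<eta> e)"]) auto
  qed
  then obtain \<delta> where \<delta>: "\<forall>e\<in>E. 0 < \<delta> e \<and> \<delta> e \<le> \<eta> e \<and> (\<forall>\<tau>. \<bar>\<tau> - \<eta> e\<bar> < \<delta> e \<longrightarrow> g e \<tau> < q)"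
    by metis
  define I where "I e = {\<eta> e - \<delta> e<..<\<eta> e + \<delta> e}" for e
  define T where "T = 2 * Max (insert 0 (\<eta> ` E))"
  have "g e \<tau> \<le> q \<and> \<tau> \<le> T" if "e \<in> E" "\<tau> \<in> I e" for e \<tau>
  proof -
    have "\<bar>\<tau> - \<eta> e\<bar> < \<delta> e" "\<tau> < \<eta> e + \<delta> e"
      using that(2) by (auto simp: I_def abs_less_iff)
    moreover have "\<eta> e \<le> Max (insert 0 (\<eta> ` E))"
      using \<open>finite E\<close> that(1) by simp
    ultimately show ?thesis
      using \<delta> that(1) by (fastforce simp: T_def)
  qed
  then have "\<forall>e\<in>E. \<forall>\<tau>\<in>I e. g e \<tau> \<le> q \<and> \<tau> \<le> T"
    by blast
  moreover have "\<forall>e\<in>E. open (I e) \<and> is_interval (I e) \<and> I e \<subseteq> {0<..} \<and> \<eta> e \<in> I e"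
    using \<delta> by (auto simp: I_def is_interval_convex_1)
  ultimately show ?thesis
    using that \<open>0 < q\<close> \<open>q < 1\<close> by blast
qed

theorem theorem3p1:
  fixes k :: nat
    and E :: "(nat \<times> nat) set"
    and A :: "nat \<Rightarrow> real^('n::{finite,linorder})^('n::{finite,linorder})"
    and P J :: "nat \<Rightarrow> complex^('n::{finite,linorder})^('n::{finite,linorder})"
    and \<eta> :: "nat \<times> nat \<Rightarrow> real"
  assumes edges: "E \<subseteq> {1..k} \<times> {1..k}"
    and no_loops: "\<forall>(r, s)\<in>E. r \<noteq> s"
    and jordan: "\<forall>i\<in>{1..k}. invertible (P i) \<and> jordan_matrix (J i) \<and>
                   cmat (A i) = P i ** J i ** matrix_inv (P i)"
    and eta: "\<forall>(r, s)\<in>E. \<eta> (r, s) > 0 \<and>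
                spec_norm ((matrix_inv (P s) ** P r) ** mat_exp (\<eta> (r, s) *\<^sub>R J r)) < 1"
  shows "\<exists>I :: nat \<times> nat \<Rightarrow> real set.
           (\<forall>e\<in>E. open (I e) \<and> is_interval (I e) \<and> I e \<subseteq> {0<..} \<and> \<eta> e \<in> I e) \<and>
           (\<forall>\<sigma> ts. admissible_signal E \<sigma> ts \<and> dwell_in I \<sigma> ts \<longrightarrow> switched_GES A \<sigma> ts)"
proof -
  define g where "g e \<tau> = spec_norm ((matrix_inv (P (snd e)) ** P (fst e)) ** mat_exp (\<tau> *\<^sub>R J (fst e)))"
    for e \<tau>
  have "finite E"
    using edges by (rule finite_subset) simp
  moreover have "0 < \<eta> e \<and> g e (\<eta> e) < 1 \<and> isCont (g e) (\<eta> e)" if "e \<in> E" for e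
    using eta that isCont_spec_norm_mult_mat_exp unfolding g_def[abs_def] by (cases e) auto
  ultimately obtain I q T where I: "\<forall>e\<in>E. open (I e) \<and> is_interval (I e) \<and> I e \<subseteq> {0<..} \<and> \<eta> e \<in> I e"
    and g_le: "\<forall>e\<in>E. \<forall>\<tau>\<in>I e. g e \<tau> \<le> q \<and> \<tau> \<le> T" and "0 < q" "q < 1"
    by (rule contraction_intervals)
  have "switched_GES A \<sigma> ts" if "admissible_signal E \<sigma> ts" "dwell_in I \<sigma> ts" for \<sigma> ts
  proof (rule switched_GES_of_contraction[OF that finite_atLeastAtMost edges _ _ \<open>0 < q\<close> \<open>q < 1\<close>])
    show "\<forall>j\<in>{1..k}. endo_of_mat (P j) * endo_of_mat (matrix_inv (P j)) = 1"
      using jordan endo_of_mat_mult_matrix_inv by blast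
    show "\<forall>(r, s)\<in>E. \<forall>\<tau>\<in>I (r, s).
        norm (endo_of_mat (matrix_inv (P s)) * flow (A r) \<tau> * endo_of_mat (P r)) \<le> q \<and> \<tau> \<le> T"
    proof (clarify)
      fix r s \<tau>
      assume "(r, s) \<in> E" "\<tau> \<in> I (r, s)"
      moreover have "r \<in> {1..k}"
        using \<open>(r, s) \<in> E\<close> edges by auto
      ultimately show "norm (endo_of_mat (matrix_inv (P s)) * flow (A r) \<tau> * endo_of_mat (P r)) \<le> q \<and> \<tau> \<le> T"
        using g_le jordan by (auto simp: g_def norm_transition_eq_spec_norm)
    qed
  qed
  then show ?thesis
    using I by blast
qed

end
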